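(* Let $v_1,\dots,v_m$ be distinct values, let $X_1,\dots,X_n$ be finite domain variables with domains $D(X_i)\subseteq\{v_1,\dots,v_m\}$, and let $B_{i,j}$ ($1\le i\le n$, $1\le j\le m$) be 0/1 variables. Consider the decomposition consisting of: the channelling constraints $X_i=v_j \leftrightarrow B_{i,j}=1$ for all $1\le i\le n$, $1\le j\le m$; the constraints $[B_{1,j},\dots,B_{n,j}]\ge_{\mathrm{lex}}[B_{1,j+1},\dots,B_{n,j+1}]$ for $1\le j<m$; and the constraints $\sum_{j=1}^m B_{i,j}=1$ for $1\le i\le n$. Then enforcing GAC on $\mathrm{Precedence}([v_1,\dots,v_m],[X_1,\dots,X_n])$ is strictly stronger than enforcing GAC on each constraint of this decomposition. That is: (i) if $\mathrm{Precedence}([v_1,\dots,v_m],[X_1,\dots,X_n])$ is GAC (with all $D(X_i)$ nonempty) and the domains of the $B_{i,j}$ are $D(B_{i,j})=\{1 \mid v_j\in D(X_i)\}\cup\{0\mid D(X_i)\neq\{v_j\}\}$, then every constraint of the decomposition is GAC; and (ii) there exist domains for the $X_i$ and $B_{i,j}$ such that every constraint of the decomposition is GAC but $\mathrm{Precedence}([v_1,\dots,v_m],[X_1,\dots,X_n])$ is not GAC.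
   Context: A support of a constraint is an assignment of a value from its domain to each of its variables that satisfies it; a constraint is GAC iff every value in every variable's domain belongs to some support. For distinct values $a,b$, $\mathrm{Precedence}([a,b],[X_1,\dots,X_n])$ holds iff $\min\{i \mid X_i=a \text{ or } i=n+1\} < \min\{i \mid X_i=b \text{ or } i=n+2\}$; $\mathrm{Precedence}([v_1,\dots,v_m],[X_1,\dots,X_n])$ holds iff $\mathrm{Precedence}([v_i,v_{i+1}],[X_1,\dots,X_n])$ holds for all $1\le i<m$. $\ge_{\mathrm{lex}}$ is the non-strict lexicographic order on 0/1 vectors. *)

theory Defs
  imports Main
begin

text \<open>A constraint is given by its scope S (a set of variables) and a relation C on
assignments (C only inspects the variables of S). D gives the domains.\<close>

definition is_support :: "'v set \<Rightarrow> ('v \<Rightarrow> 'd set) \<Rightarrow> (('v \<Rightarrow> 'd) \<Rightarrow> bool) \<Rightarrow> ('v \<Rightarrow> 'd) \<Rightarrow> bool" where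
  "is_support S D C \<sigma> \<longleftrightarrow> (\<forall>x\<in>S. \<sigma> x \<in> D x) \<and> C \<sigma>"

definition GAC :: "'v set \<Rightarrow> ('v \<Rightarrow> 'd set) \<Rightarrow> (('v \<Rightarrow> 'd) \<Rightarrow> bool) \<Rightarrow> bool" where
  "GAC S D C \<longleftrightarrow> (\<forall>x\<in>S. \<forall>d\<in>D x. \<exists>\<sigma>. is_support S D C \<sigma> \<and> \<sigma> x = d)"

section \<open>Precedence (variables and values indexed from 1)\<close>

definition prec_pair :: "'a \<Rightarrow> 'a \<Rightarrow> nat \<Rightarrow> (nat \<Rightarrow> 'a) \<Rightarrow> bool" where
  "prec_pair a b n X \<longleftrightarrow>
     (LEAST i. (i \<in> {1..n} \<and> X i = a) \<or> i = n + 1) < (LEAST i. (i \<in> {1..n} \<and> X i = b) \<or> i = n + 2)"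

definition Precedence :: "(nat \<Rightarrow> 'a) \<Rightarrow> nat \<Rightarrow> nat \<Rightarrow> (nat \<Rightarrow> 'a) \<Rightarrow> bool" where
  "Precedence v m n X \<longleftrightarrow> (\<forall>i. 1 \<le> i \<and> i < m \<longrightarrow> prec_pair (v i) (v (i + 1)) n X)"

definition lex_ge :: "nat \<Rightarrow> (nat \<Rightarrow> nat) \<Rightarrow> (nat \<Rightarrow> nat) \<Rightarrow> bool" where
  "lex_ge n b c \<longleftrightarrow> (\<forall>i\<in>{1..n}. b i = c i) \<or>
     (\<exists>k\<in>{1..n}. (\<forall>i\<in>{1..<k}. b i = c i) \<and> b k > c k)"

datatype var = XV nat | BV nat nat

fun dom_of :: "(nat \<Rightarrow> 'a set) \<Rightarrow> (nat \<Rightarrow> nat \<Rightarrow> nat set) \<Rightarrow> var \<Rightarrow> ('a + nat) set" where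
  "dom_of DX DB (XV i) = Inl ` DX i"
| "dom_of DX DB (BV i j) = Inr ` DB i j"

definition xval :: "(var \<Rightarrow> 'a + nat) \<Rightarrow> nat \<Rightarrow> 'a" where
  "xval \<sigma> i = (case \<sigma> (XV i) of Inl a \<Rightarrow> a | Inr _ \<Rightarrow> undefined)"

definition bval :: "(var \<Rightarrow> 'a + nat) \<Rightarrow> nat \<Rightarrow> nat \<Rightarrow> nat" where
  "bval \<sigma> i j = (case \<sigma> (BV i j) of Inr b \<Rightarrow> b | Inl _ \<Rightarrow> undefined)"

definition GAC_prec :: "(nat \<Rightarrow> 'a) \<Rightarrow> nat \<Rightarrow> nat \<Rightarrow> (nat \<Rightarrow> 'a set) \<Rightarrow> (nat \<Rightarrow> nat \<Rightarrow> nat set) \<Rightarrow> bool" where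
  "GAC_prec v m n DX DB \<longleftrightarrow>
     GAC {XV i | i. i \<in> {1..n}} (dom_of DX DB) (\<lambda>\<sigma>. Precedence v m n (xval \<sigma>))"

definition GAC_decomp :: "(nat \<Rightarrow> 'a) \<Rightarrow> nat \<Rightarrow> nat \<Rightarrow> (nat \<Rightarrow> 'a set) \<Rightarrow> (nat \<Rightarrow> nat \<Rightarrow> nat set) \<Rightarrow> bool" where
  "GAC_decomp v m n DX DB \<longleftrightarrow>
     (\<forall>i\<in>{1..n}. \<forall>j\<in>{1..m}.
        GAC {XV i, BV i j} (dom_of DX DB) (\<lambda>\<sigma>. xval \<sigma> i = v j \<longleftrightarrow> bval \<sigma> i j = 1))
   \<and> (\<forall>j. 1 \<le> j \<and> j < m \<longrightarrow>
        GAC ({BV i j | i. i \<in> {1..n}} \<union> {BV i (j + 1) | i. i \<in> {1..n}}) (dom_of DX DB)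
            (\<lambda>\<sigma>. lex_ge n (\<lambda>i. bval \<sigma> i j) (\<lambda>i. bval \<sigma> i (j + 1))))
   \<and> (\<forall>i\<in>{1..n}.
        GAC {BV i j | j. j \<in> {1..m}} (dom_of DX DB) (\<lambda>\<sigma>. (\<Sum>j=1..m. bval \<sigma> i j) = 1))"

end

theory Submission
  imports Defs
begin

(* Proof idea.
   (i) Call f a Precedence solution if f i \<in> D(X_i) for all i and Precedence holds for f.
   Channelling f gives the full assignment X_i = f i, B_ij = [f i = v_j].  If Precedence is
   GAC, every value a of every X_k occurs in some solution, and with the prescribed domains
   every value of B_kc is the indicator [a = v_c] of some a \<in> D(X_k).  So every value of every
   variable is taken by the channelling of some solution; since channelled solutions satisfy
   each decomposed constraint (channelling trivially, the sum because v is injective, the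
   lex-ordering because Precedence of a consecutive pair implies it on the indicator columns),
   all decomposed constraints are GAC.
   (ii) With one variable X_1 \<in> {1,2}, values [1,2] and B-domains {0,1}, every decomposed
   constraint is GAC, but X_1 = 2 has no Precedence support since 2 would occur before 1. *)

lemma GAC_by_supports:
  assumes "\<And>\<sigma>. \<sigma> \<in> \<Sigma> \<Longrightarrow> is_support S D C \<sigma>"
    and "\<And>x d. x \<in> S \<Longrightarrow> d \<in> D x \<Longrightarrow> \<exists>\<sigma>\<in>\<Sigma>. \<sigma> x = d"
  shows "GAC S D C"
  using assms unfolding GAC_def by blast

lemma prec_pair_lex_ge:
  assumes "prec_pair a b n X" "a \<noteq> b"
  shows "lex_ge n (\<lambda>i. if X i = a then 1 else 0) (\<lambda>i. if X i = b then 1 else 0)"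
proof -
  define p where "p = (LEAST i. (i \<in> {1..n} \<and> X i = a) \<or> i = n + 1)"
  define q where "q = (LEAST i. (i \<in> {1..n} \<and> X i = b) \<or> i = n + 2)"
  have "p < q" using assms(1) unfolding prec_pair_def p_def q_def .
  have p_first: "(p \<in> {1..n} \<and> X p = a) \<or> p = n + 1"
    unfolding p_def by (rule LeastI[of _ "n + 1"]) simp
  have before_p: "\<not> (i \<in> {1..n} \<and> X i = a)" if "i < p" for i
    using not_less_Least[OF that[unfolded p_def]] by blast
  have no_b_before_q: "X i \<noteq> b" if "i \<in> {1..n}" "i < q" for i
    using that Least_le[of "\<lambda>i. (i \<in> {1..n} \<and> X i = b) \<or> i = n + 2" i] unfolding q_def by auto
  have agree: "(if X i = a then 1 else 0) = (if X i = b then (1::nat) else 0)"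
    if "i \<in> {1..n}" "i < p" for i
    using before_p[OF that(2)] no_b_before_q[OF that(1)] that \<open>p < q\<close> by auto
  show ?thesis
  proof (cases "p = n + 1")
    case True
    then show ?thesis using agree unfolding lex_ge_def by auto
  next
    case False
    with p_first have "p \<in> {1..n}" "X p = a" by auto
    moreover have "X p \<noteq> b" using no_b_before_q \<open>p \<in> {1..n}\<close> \<open>p < q\<close> by blast
    ultimately show ?thesis
      using agree assms(2) unfolding lex_ge_def by (intro disjI2 bexI[of _ p]) auto
  qed
qed

lemma not_prec_pair_if_first:
  assumes "n \<ge> 1" "X 1 = b" "a \<noteq> b"
  shows "\<not> prec_pair a b n X"
proof -
  have "(LEAST i. (i \<in> {1..n} \<and> X i = b) \<or> i = n + 2) = 1"
    using assms by (intro Least_equality) auto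
  moreover have "(LEAST i. (i \<in> {1..n} \<and> X i = a) \<or> i = n + 1) \<ge> 1"
    by (rule LeastI2[of _ "n + 1"]) auto
  ultimately show ?thesis unfolding prec_pair_def by simp
qed

lemma indicator_sum_one:
  fixes v :: "nat \<Rightarrow> 'a" and m :: nat
  assumes "inj_on v {1..m}" "a \<in> v ` {1..m}"
  shows "(\<Sum>j=1..m. if a = v j then 1 else 0) = (1::nat)"
proof -
  obtain j0 where j0: "j0 \<in> {1..m}" "a = v j0" using assms(2) by blast
  have "(\<Sum>j=1..m. if a = v j then 1 else 0) = (\<Sum>j\<in>{1..m}. if j = j0 then 1 else (0::nat))"
    using j0 assms(1) by (intro sum.cong) (auto dest: inj_onD)
  also have "\<dots> = 1" using j0(1) by simp
  finally show ?thesis .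
qed

definition channel :: "(nat \<Rightarrow> 'a) \<Rightarrow> (nat \<Rightarrow> 'a) \<Rightarrow> var \<Rightarrow> 'a + nat" where
  "channel v f y = (case y of XV i \<Rightarrow> Inl (f i) | BV i j \<Rightarrow> Inr (if f i = v j then 1 else 0))"

lemma channel_simps [simp]:
  "channel v f (XV i) = Inl (f i)"
  "channel v f (BV i j) = Inr (if f i = v j then 1 else 0)"
  "xval (channel v f) i = f i"
  "bval (channel v f) i j = (if f i = v j then 1 else 0)"
  by (simp_all add: channel_def xval_def bval_def)

definition prec_solution :: "(nat \<Rightarrow> 'a) \<Rightarrow> nat \<Rightarrow> nat \<Rightarrow> (nat \<Rightarrow> 'a set) \<Rightarrow> (nat \<Rightarrow> 'a) \<Rightarrow> bool" where
  "prec_solution v m n DX f \<longleftrightarrow> (\<forall>i\<in>{1..n}. f i \<in> DX i) \<and> Precedence v m n f"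

lemma prec_solution_through:
  assumes "GAC_prec v m n DX DB" "k \<in> {1..n}" "a \<in> DX k"
  shows "\<exists>f. prec_solution v m n DX f \<and> f k = a"
proof -
  have "XV k \<in> {XV i | i. i \<in> {1..n}}" "Inl a \<in> dom_of DX DB (XV k)" using assms(2,3) by auto
  then obtain \<tau> where \<tau>: "is_support {XV i | i. i \<in> {1..n}} (dom_of DX DB)
                             (\<lambda>\<sigma>. Precedence v m n (xval \<sigma>)) \<tau>" "\<tau> (XV k) = Inl a"
    using assms(1) unfolding GAC_prec_def GAC_def by blast
  have "xval \<tau> i \<in> DX i" if "i \<in> {1..n}" for i
    using \<tau>(1) that unfolding is_support_def xval_def by fastforce
  then show ?thesis
    using \<tau> unfolding prec_solution_def is_support_def by (intro exI[of _ "xval \<tau>"]) (auto simp: xval_def)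
qed

definition model_vars :: "nat \<Rightarrow> nat \<Rightarrow> var set" where
  "model_vars m n = {XV i | i. i \<in> {1..n}} \<union> {BV i j | i j. i \<in> {1..n} \<and> j \<in> {1..m}}"

context
  fixes v :: "nat \<Rightarrow> 'a" and m n :: nat and DX :: "nat \<Rightarrow> 'a set" and DB :: "nat \<Rightarrow> nat \<Rightarrow> nat set"
  assumes DX_nonempty: "\<forall>i\<in>{1..n}. DX i \<noteq> {}"
    and DB_channelled: "\<forall>i\<in>{1..n}. \<forall>j\<in>{1..m}.
          DB i j = (if v j \<in> DX i then {1} else {}) \<union> (if DX i \<noteq> {v j} then {0} else {})"
begin

lemma channel_in_domains:
  assumes "\<forall>i\<in>{1..n}. f i \<in> DX i" "y \<in> model_vars m n"
  shows "channel v f y \<in> dom_of DX DB y"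
proof (cases y)
  case (XV i)
  then show ?thesis using assms unfolding model_vars_def by auto
next
  case (BV i j)
  then have ij: "i \<in> {1..n}" "j \<in> {1..m}" using assms(2) unfolding model_vars_def by auto
  have "f i \<in> DX i" using assms(1) ij(1) by blast
  then have "(if f i = v j then 1 else 0) \<in> DB i j"
    using DB_channelled ij by auto
  then show ?thesis using BV by simp
qed

lemma B_value_is_indicator:
  assumes "i \<in> {1..n}" "j \<in> {1..m}" "b \<in> DB i j"
  shows "\<exists>a\<in>DX i. (if a = v j then 1 else 0) = b"
proof (cases "b = 1")
  case True
  then have "v j \<in> DX i" using assms DB_channelled by (auto split: if_splits)
  with True show ?thesis by auto
next
  case False
  then have "DX i \<noteq> {v j}" using assms DB_channelled by (auto split: if_splits)
  moreover have "DX i \<noteq> {}" using DX_nonempty assms(1) by blast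
  ultimately obtain a where "a \<in> DX i" "a \<noteq> v j" by blast
  moreover have "b = 0" using False assms DB_channelled by (auto split: if_splits)
  ultimately show ?thesis by auto
qed

lemma value_on_channelled_solution:
  assumes "GAC_prec v m n DX DB" "y \<in> model_vars m n" "d \<in> dom_of DX DB y"
  shows "\<exists>f. prec_solution v m n DX f \<and> channel v f y = d"
proof -
  from assms(2,3) consider
      (X) k a where "k \<in> {1..n}" "y = XV k" "a \<in> DX k" "d = Inl a"
    | (B) k c b where "k \<in> {1..n}" "c \<in> {1..m}" "y = BV k c" "b \<in> DB k c" "d = Inr b"
    unfolding model_vars_def by auto
  then show ?thesis
  proof cases
    case X
    then show ?thesis using prec_solution_through[OF assms(1)] by fastforce
  next
    case B
    obtain a where "a \<in> DX k" "(if a = v c then 1 else 0) = b"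
      using B_value_is_indicator B by blast
    then show ?thesis using prec_solution_through[OF assms(1) \<open>k \<in> {1..n}\<close>] B by fastforce
  qed
qed

lemma GAC_by_channelled_solutions:
  assumes "GAC_prec v m n DX DB" "S \<subseteq> model_vars m n"
    and "\<And>f. prec_solution v m n DX f \<Longrightarrow> C (channel v f)"
  shows "GAC S (dom_of DX DB) C"
proof (rule GAC_by_supports[where \<Sigma> = "channel v ` Collect (prec_solution v m n DX)"])
  show "is_support S (dom_of DX DB) C \<sigma>" if "\<sigma> \<in> channel v ` Collect (prec_solution v m n DX)" for \<sigma>
    using that assms(2,3) channel_in_domains unfolding is_support_def prec_solution_def by blast
  show "\<exists>\<sigma>\<in>channel v ` Collect (prec_solution v m n DX). \<sigma> x = d"
    if "x \<in> S" "d \<in> dom_of DX DB x" for x d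
    using value_on_channelled_solution[OF assms(1)] that assms(2) by blast
qed

end

lemma GAC_prec_implies_GAC_decomp:
  \<comment> \<open>Part (i): each decomposed constraint holds on channelled solutions, hence is GAC.\<close>
  assumes inj: "inj_on v {1..m}"
    and DX: "\<forall>i\<in>{1..n}. DX i \<subseteq> v ` {1..m} \<and> DX i \<noteq> {}"
    and gac: "GAC_prec v m n DX DB"
    and DB: "\<forall>i\<in>{1..n}. \<forall>j\<in>{1..m}.
          DB i j = (if v j \<in> DX i then {1} else {}) \<union> (if DX i \<noteq> {v j} then {0} else {})"
  shows "GAC_decomp v m n DX DB"
proof -
  have DX_ne: "\<forall>i\<in>{1..n}. DX i \<noteq> {}" using DX by blast
  note GAC_channel = GAC_by_channelled_solutions[OF DX_ne DB gac]
  have lex: "lex_ge n (\<lambda>i. bval (channel v f) i j) (\<lambda>i. bval (channel v f) i (j + 1))"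
    if "prec_solution v m n DX f" "1 \<le> j" "j < m" for f j
  proof -
    have "v j \<noteq> v (j + 1)" using inj that(2,3) by (auto dest: inj_onD)
    moreover have "prec_pair (v j) (v (j + 1)) n f"
      using that unfolding prec_solution_def Precedence_def by blast
    ultimately show ?thesis using prec_pair_lex_ge by simp
  qed
  have sum: "(\<Sum>j=1..m. bval (channel v f) i j) = 1" if "prec_solution v m n DX f" "i \<in> {1..n}" for f i
  proof -
    have "f i \<in> v ` {1..m}" using DX that unfolding prec_solution_def by blast
    then show ?thesis using indicator_sum_one[OF inj] by simp
  qed
  show ?thesis
    unfolding GAC_decomp_def
    by (intro conjI ballI allI impI; rule GAC_channel)
      (use lex sum in \<open>auto simp: model_vars_def\<close>)
qed

definition uniform :: "nat \<Rightarrow> nat \<Rightarrow> nat \<Rightarrow> var \<Rightarrow> nat + nat" where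
  "uniform x a b y = (case y of XV _ \<Rightarrow> Inl x | BV _ j \<Rightarrow> Inr (if j = 1 then a else b))"

lemma uniform_simps [simp]:
  "uniform x a b (XV i) = Inl x"
  "uniform x a b (BV i j) = Inr (if j = 1 then a else b)"
  "xval (uniform x a b) i = x"
  "bval (uniform x a b) i j = (if j = 1 then a else b)"
  by (simp_all add: uniform_def xval_def bval_def)

lemma counterexample:
  \<comment> \<open>Part (ii): one variable, values 1, 2; the decomposition misses that X_1 = 2 is impossible.\<close>
  defines "DX \<equiv> \<lambda>_::nat. {1::nat, 2}" and "DB \<equiv> \<lambda>(_::nat) (_::nat). {0::nat, 1}"
  shows "GAC_decomp (\<lambda>x. x) 2 1 DX DB" and "\<not> GAC_prec (\<lambda>x. x) 2 1 DX DB"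
proof -
  have two: "{1..2::nat} = {1, 2}" by auto
  \<comment> \<open>X_1 = 1 with B_11 = 1, B_12 = 0, and X_1 = 2 with B_11 = 0, B_12 = 1 support channelling
      and sum; the columns (0,0), (1,0), (1,1) support the lex constraint.\<close>
  have channelling: "GAC {XV 1, BV 1 j} (dom_of DX DB) (\<lambda>\<sigma>. xval \<sigma> 1 = j \<longleftrightarrow> bval \<sigma> 1 j = 1)"
    if j: "j \<in> {1..2}" for j
  proof (rule GAC_by_supports[where \<Sigma> = "{uniform 1 1 0, uniform 2 0 1}"])
    show "is_support {XV 1, BV 1 j} (dom_of DX DB) (\<lambda>\<sigma>. xval \<sigma> 1 = j \<longleftrightarrow> bval \<sigma> 1 j = 1) \<sigma>"
      if "\<sigma> \<in> {uniform 1 1 0, uniform 2 0 1}" for \<sigma>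
      using that j unfolding is_support_def DX_def DB_def two by auto
    show "\<exists>\<sigma>\<in>{uniform 1 1 0, uniform 2 0 1}. \<sigma> x = d" if "x \<in> {XV 1, BV 1 j}" "d \<in> dom_of DX DB x" for x d
      using that j unfolding DX_def DB_def two by auto
  qed
  have lex: "GAC ({BV i 1 | i. i \<in> {1..1}} \<union> {BV i (1 + 1) | i. i \<in> {1..1}}) (dom_of DX DB)
               (\<lambda>\<sigma>. lex_ge 1 (\<lambda>i. bval \<sigma> i 1) (\<lambda>i. bval \<sigma> i (1 + 1)))"
  proof (rule GAC_by_supports[where \<Sigma> = "{uniform 1 0 0, uniform 1 1 0, uniform 1 1 1}"])
    show "is_support ({BV i 1 | i. i \<in> {1..1}} \<union> {BV i (1 + 1) | i. i \<in> {1..1}}) (dom_of DX DB)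
               (\<lambda>\<sigma>. lex_ge 1 (\<lambda>i. bval \<sigma> i 1) (\<lambda>i. bval \<sigma> i (1 + 1))) \<sigma>"
      if "\<sigma> \<in> {uniform 1 0 0, uniform 1 1 0, uniform 1 1 1}" for \<sigma>
      using that unfolding is_support_def DX_def DB_def lex_ge_def by auto
    show "\<exists>\<sigma>\<in>{uniform 1 0 0, uniform 1 1 0, uniform 1 1 1}. \<sigma> x = d"
      if "x \<in> {BV i 1 | i. i \<in> {1..1}} \<union> {BV i (1 + 1) | i. i \<in> {1..1}}" "d \<in> dom_of DX DB x" for x d
      using that unfolding DB_def by auto
  qed
  have sum: "GAC {BV 1 j | j. j \<in> {1..2}} (dom_of DX DB) (\<lambda>\<sigma>. (\<Sum>j=1..2. bval \<sigma> 1 j) = 1)"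
  proof (rule GAC_by_supports[where \<Sigma> = "{uniform 1 1 0, uniform 2 0 1}"])
    show "is_support {BV 1 j | j. j \<in> {1..2}} (dom_of DX DB) (\<lambda>\<sigma>. (\<Sum>j=1..2. bval \<sigma> 1 j) = 1) \<sigma>"
      if "\<sigma> \<in> {uniform 1 1 0, uniform 2 0 1}" for \<sigma>
      using that unfolding is_support_def DX_def DB_def two by auto
    show "\<exists>\<sigma>\<in>{uniform 1 1 0, uniform 2 0 1}. \<sigma> x = d" if "x \<in> {BV 1 j | j. j \<in> {1..2}}" "d \<in> dom_of DX DB x" for x d
      using that unfolding DB_def two by auto
  qed
  show "GAC_decomp (\<lambda>x. x) 2 1 DX DB"
    unfolding GAC_decomp_def
  proof (intro conjI ballI allI impI)
    show "GAC {XV i, BV i j} (dom_of DX DB) (\<lambda>\<sigma>. xval \<sigma> i = j \<longleftrightarrow> bval \<sigma> i j = 1)"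
      if "i \<in> {1..1}" "j \<in> {1..2}" for i j
      using that channelling by simp
    show "GAC ({BV i j | i. i \<in> {1..1}} \<union> {BV i (j + 1) | i. i \<in> {1..1}}) (dom_of DX DB)
            (\<lambda>\<sigma>. lex_ge 1 (\<lambda>i. bval \<sigma> i j) (\<lambda>i. bval \<sigma> i (j + 1)))" if "1 \<le> j \<and> j < 2" for j
    proof -
      have "j = 1" using that by simp
      then show ?thesis using lex by simp
    qed
    show "GAC {BV i j | j. j \<in> {1..2}} (dom_of DX DB) (\<lambda>\<sigma>. (\<Sum>j=1..2. bval \<sigma> i j) = 1)"
      if "i \<in> {1..1}" for i
      using that sum by simp
  qed
  show "\<not> GAC_prec (\<lambda>x. x) 2 1 DX DB"
  proof
    assume "GAC_prec (\<lambda>x. x) 2 1 DX DB"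
    moreover have "XV 1 \<in> {XV i | i. i \<in> {1..1::nat}}" "Inl 2 \<in> dom_of DX DB (XV 1)"
      by (auto simp: DX_def)
    ultimately obtain \<sigma> where prec: "Precedence (\<lambda>x. x) 2 1 (xval \<sigma>)" and "\<sigma> (XV 1) = Inl 2"
      unfolding GAC_prec_def GAC_def is_support_def by blast
    then have "xval \<sigma> 1 = 2" by (simp add: xval_def)
    moreover have "prec_pair 1 2 1 (xval \<sigma>)"
      using spec[OF prec[unfolded Precedence_def], of 1] by (simp add: numeral_2_eq_2)
    ultimately show False using not_prec_pair_if_first[of 1 "xval \<sigma>" 2 1] by simp
  qed
qed

theorem theorem5:
  shows "(\<forall>(v :: nat \<Rightarrow> 'a) m n DX DB.
            inj_on v {1..m}
          \<and> (\<forall>i\<in>{1..n}. DX i \<subseteq> v ` {1..m} \<and> DX i \<noteq> {})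
          \<and> GAC_prec v m n DX DB
          \<and> (\<forall>i\<in>{1..n}. \<forall>j\<in>{1..m}.
               DB i j = (if v j \<in> DX i then {1} else {}) \<union> (if DX i \<noteq> {v j} then {0} else {}))
          \<longrightarrow> GAC_decomp v m n DX DB)
       \<and> (\<exists>(v :: nat \<Rightarrow> nat) m n DX DB.
            inj_on v {1..m}
          \<and> (\<forall>i\<in>{1..n}. DX i \<subseteq> v ` {1..m} \<and> DX i \<noteq> {})
          \<and> (\<forall>i\<in>{1..n}. \<forall>j\<in>{1..m}. DB i j \<subseteq> {0, 1})
          \<and> GAC_decomp v m n DX DB
          \<and> \<not> GAC_prec v m n DX DB)"
proof (rule conjI, goal_cases)
  case 1
  show ?case
    by (intro allI impI, elim conjE) (rule GAC_prec_implies_GAC_decomp; assumption)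
next
  case 2
  let ?DX = "\<lambda>_::nat. {1::nat, 2}" and ?DB = "\<lambda>(_::nat) (_::nat). {0::nat, 1}"
  show ?case
  proof (intro exI conjI)
    show "inj_on (\<lambda>x::nat. x) {1..2}" by simp
    show "\<forall>i\<in>{1..1::nat}. ?DX i \<subseteq> (\<lambda>x. x) ` {1..2} \<and> ?DX i \<noteq> {}" by auto
    show "\<forall>i\<in>{1..1::nat}. \<forall>j\<in>{1..2::nat}. ?DB i j \<subseteq> {0, 1}" by auto
    show "GAC_decomp (\<lambda>x. x) 2 1 ?DX ?DB" "\<not> GAC_prec (\<lambda>x. x) 2 1 ?DX ?DB"
      by (fact counterexample(1), fact counterexample(2))
  qed
qed

end
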